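(* Let $G$ be a connected graph with $n\ge 4$ vertices and $m=e(G)\ge n$ edges. If $R(G)>\sqrt{n-1}+\frac{2m-2n+2}{n\sqrt{n-1}}$, then $\frac{q(G)}{R(G)}<\frac{n}{\sqrt{n-1}}$.
   Context: All graphs are finite and simple; $e(G)$ is the number of edges. For a vertex $u$, $d(u)$ is its degree. The Randić index is $R(G)=\sum_{\{u,v\}\in E(G)} \frac{1}{\sqrt{d(u)d(v)}}$. The signless Laplacian is $Q=D+A$ ($D$ the diagonal degree matrix, $A$ the adjacency matrix), and $q(G)$ is its largest eigenvalue. *)

theory Defs
  imports Complex_Main
begin

definition simple_graph :: "'a set \<Rightarrow> ('a \<Rightarrow> 'a \<Rightarrow> bool) \<Rightarrow> bool" where
  "simple_graph V E \<longleftrightarrow> finite V \<and> (\<forall>u v. E u v \<longrightarrow> u \<in> V \<and> v \<in> V)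
     \<and> (\<forall>u v. E u v \<longrightarrow> E v u) \<and> (\<forall>u. \<not> E u u)"

definition connected_graph :: "'a set \<Rightarrow> ('a \<Rightarrow> 'a \<Rightarrow> bool) \<Rightarrow> bool" where
  "connected_graph V E \<longleftrightarrow> V \<noteq> {} \<and> (\<forall>u\<in>V. \<forall>v\<in>V. E\<^sup>*\<^sup>* u v)"

definition edges :: "'a set \<Rightarrow> ('a \<Rightarrow> 'a \<Rightarrow> bool) \<Rightarrow> 'a set set" where
  "edges V E = {{u, v} | u v. u \<in> V \<and> v \<in> V \<and> E u v}"

definition num_edges :: "'a set \<Rightarrow> ('a \<Rightarrow> 'a \<Rightarrow> bool) \<Rightarrow> nat" where
  "num_edges V E = card (edges V E)"

definition degree :: "'a set \<Rightarrow> ('a \<Rightarrow> 'a \<Rightarrow> bool) \<Rightarrow> 'a \<Rightarrow> nat" where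
  "degree V E u = card {v \<in> V. E u v}"

definition randic :: "'a set \<Rightarrow> ('a \<Rightarrow> 'a \<Rightarrow> bool) \<Rightarrow> real" where
  "randic V E = (\<Sum>e\<in>edges V E. 1 / sqrt (\<Prod>w\<in>e. real (degree V E w)))"

text \<open>Eigenvalues of the signless Laplacian Q = D + A, viewed as a linear map on
real functions on V: (Q x)(u) = d(u) x(u) + sum of x(v) over neighbours v of u.\<close>
definition signless_laplacian_eigenvalue :: "'a set \<Rightarrow> ('a \<Rightarrow> 'a \<Rightarrow> bool) \<Rightarrow> real \<Rightarrow> bool" where
  "signless_laplacian_eigenvalue V E mu \<longleftrightarrow>
     (\<exists>x :: 'a \<Rightarrow> real. (\<exists>u\<in>V. x u \<noteq> 0) \<and>
        (\<forall>u\<in>V. real (degree V E u) * x u + (\<Sum>v\<in>{w\<in>V. E u w}. x v) = mu * x u))"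

text \<open>q(G): the largest eigenvalue of Q (Q is real symmetric, so all eigenvalues are real).\<close>
definition signless_spectral_radius :: "'a set \<Rightarrow> ('a \<Rightarrow> 'a \<Rightarrow> bool) \<Rightarrow> real" where
  "signless_spectral_radius V E = Max {mu. signless_laplacian_eigenvalue V E mu}"

end

theory Submission
  imports Defs "Jordan_Normal_Form.Spectral_Radius"
begin

text \<open>
  For an eigenvector x of Q, pick a vertex u maximising |x u| / d(u). The eigenvalue equation at u
  gives q d(u) \<le> d(u)^2 + S(u), where S(u) is the degree sum over the neighbours of u. In a connected
  graph S(u) \<le> d(u) (n - 1) and S(u) \<le> 2m - n + 1, which yields q \<le> 2m/(n - 1) + n - 2. The hypothesis
  on R(G) says exactly that this bound is below R(G) n / sqrt(n - 1). That q(G) exists at all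
  (the spectrum of Q is finite, nonempty and real) comes from the characteristic polynomial.
\<close>

lemma simple_graph_finite: "simple_graph V E \<Longrightarrow> finite V"
  unfolding simple_graph_def by blast

lemma finite_edges: "simple_graph V E \<Longrightarrow> finite (edges V E)"
  by (rule finite_subset[of _ "Pow V"]) (auto simp: edges_def simple_graph_finite)

lemma card_edge: "simple_graph V E \<Longrightarrow> e \<in> edges V E \<Longrightarrow> card e = 2"
  unfolding edges_def simple_graph_def by (auto simp: card_insert_if)

lemma degree_eq_card_incident_edges:
  assumes sg: "simple_graph V E" and u: "u \<in> V"
  shows "Defs.degree V E u = card {e \<in> edges V E. u \<in> e}"
proof -
  have "bij_betw (\<lambda>v. {u, v}) {v \<in> V. E u v} {e \<in> edges V E. u \<in> e}"
  proof (rule bij_betwI')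
    fix e assume "e \<in> {e \<in> edges V E. u \<in> e}"
    then obtain a b where e: "e = {a, b}" "E a b" "E b a" "a \<in> V" "b \<in> V" "u \<in> e"
      using sg unfolding edges_def simple_graph_def by auto
    then consider "u = a" | "u = b"
      by blast
    then show "\<exists>v\<in>{v \<in> V. E u v}. e = {u, v}"
      by cases (use e in \<open>auto simp: insert_commute\<close>)
  qed (use u in \<open>auto simp: edges_def doubleton_eq_iff\<close>)
  then show ?thesis
    unfolding Defs.degree_def by (rule bij_betw_same_card)
qed

lemma sum_degree_eq_twice_num_edges:
  assumes sg: "simple_graph V E"
  shows "(\<Sum>u\<in>V. Defs.degree V E u) = 2 * num_edges V E"
proof -
  have "(\<Sum>u\<in>V. Defs.degree V E u) = (\<Sum>u\<in>V. \<Sum>e\<in>edges V E. if u \<in> e then 1 else 0)"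
    using finite_edges[OF sg] by (simp add: degree_eq_card_incident_edges[OF sg] sum.If_cases Int_def)
  also have "\<dots> = (\<Sum>e\<in>edges V E. \<Sum>u\<in>V. if u \<in> e then 1 else 0)"
    by (rule sum.swap)
  also have "\<dots> = (\<Sum>e\<in>edges V E. card e)"
  proof (rule sum.cong)
    fix e assume "e \<in> edges V E"
    then have "V \<inter> {u. u \<in> e} = e"
      unfolding edges_def by auto
    then show "(\<Sum>u\<in>V. if u \<in> e then 1 else 0) = card e"
      using simple_graph_finite[OF sg] by (simp add: sum.If_cases)
  qed simp
  also have "\<dots> = 2 * num_edges V E"
    unfolding num_edges_def using card_edge[OF sg] by simp
  finally show ?thesis .
qed

lemma degree_less_card:
  assumes "simple_graph V E" and "u \<in> V"
  shows "Defs.degree V E u < card V"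
proof -
  have "{v \<in> V. E u v} \<subset> V"
    using assms unfolding simple_graph_def by auto
  then show ?thesis
    unfolding Defs.degree_def using assms(1) by (simp add: psubset_card_mono simple_graph_finite)
qed

lemma one_le_degree:
  assumes sg: "simple_graph V E" and "connected_graph V E" and "card V \<ge> 2" and u: "u \<in> V"
  shows "1 \<le> Defs.degree V E u"
proof -
  have "\<not> V \<subseteq> {u}"
    using \<open>card V \<ge> 2\<close> card_mono[of "{u}" V] by auto
  then obtain v where v: "v \<in> V" "v \<noteq> u"
    by blast
  have "E\<^sup>*\<^sup>* u v"
    using \<open>connected_graph V E\<close> u v unfolding connected_graph_def by blast
  then obtain w where "E u w"
    using v(2) by (cases rule: converse_rtranclpE) auto
  then have "{v \<in> V. E u v} \<noteq> {}"
    using sg unfolding simple_graph_def by blast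
  then show ?thesis
    unfolding Defs.degree_def using simple_graph_finite[OF sg]
    by (simp add: Suc_le_eq card_gt_0_iff)
qed

text \<open>The vertices outside the closed neighbourhood of u contribute at least one each to the
  degree sum.\<close>
lemma sum_neighbour_degrees_le:
  assumes sg: "simple_graph V E" and pos: "\<And>w. w \<in> V \<Longrightarrow> 1 \<le> Defs.degree V E w"
    and u: "u \<in> V"
  shows "(\<Sum>v\<in>{w\<in>V. E u w}. Defs.degree V E v) + card V \<le> 2 * num_edges V E + 1"
proof -
  let ?d = "Defs.degree V E" and ?N = "{w\<in>V. E u w}"
  define R where "R = V - ?N - {u}"
  have fin: "finite V"
    using sg by (rule simple_graph_finite)
  have "u \<notin> ?N"
    using sg unfolding simple_graph_def by blast
  then have V: "V = ?N \<union> (insert u R)" and disj: "?N \<inter> insert u R = {}" "u \<notin> R"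
    using u unfolding R_def by auto
  have "finite R"
    using fin unfolding R_def by blast
  have "card V = ?d u + (1 + card R)"
    using fin \<open>finite R\<close> disj by (subst V) (simp add: card_Un_disjoint Defs.degree_def)
  moreover have "card R \<le> (\<Sum>w\<in>R. ?d w)"
    using pos sum_mono[of R "\<lambda>_. 1" ?d] unfolding R_def by auto
  moreover have "(\<Sum>w\<in>V. ?d w) = (\<Sum>v\<in>?N. ?d v) + (?d u + (\<Sum>w\<in>R. ?d w))"
    using fin \<open>finite R\<close> disj by (subst V) (simp add: sum.union_disjoint)
  ultimately show ?thesis
    using sum_degree_eq_twice_num_edges[OF sg] by linarith
qed

text \<open>Evaluate the eigenvalue equation at a vertex u maximising |x u| / d u.\<close>
lemma signless_eigenvalue_le_at_vertex:
  assumes sg: "simple_graph V E" and pos: "\<And>w. w \<in> V \<Longrightarrow> 1 \<le> Defs.degree V E w"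
    and ev: "signless_laplacian_eigenvalue V E mu"
  obtains u where "u \<in> V"
    "mu * real (Defs.degree V E u)
       \<le> (real (Defs.degree V E u))\<^sup>2 + (\<Sum>v\<in>{w\<in>V. E u w}. real (Defs.degree V E v))"
proof -
  let ?N = "\<lambda>u. {w\<in>V. E u w}"
  define d where "d w = real (Defs.degree V E w)" for w
  have d1: "1 \<le> d w" if "w \<in> V" for w
    using pos[OF that] unfolding d_def by simp
  obtain x where x0: "\<exists>u\<in>V. x u \<noteq> 0"
    and x: "\<And>u. u \<in> V \<Longrightarrow> d u * x u + (\<Sum>v\<in>?N u. x v) = mu * x u"
    using ev unfolding signless_laplacian_eigenvalue_def d_def by blast
  define y where "y w = \<bar>x w\<bar> / d w" for w
  have fin: "finite V"
    using sg by (rule simple_graph_finite)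
  have "Max (y ` V) \<in> y ` V"
    using fin x0 by (intro Max_in) auto
  then obtain u where u: "u \<in> V" and "y u = Max (y ` V)"
    by (metis imageE)
  then have umax: "y w \<le> y u" if "w \<in> V" for w
    using fin that by simp
  have xy: "\<bar>x w\<bar> = d w * y w" if "w \<in> V" for w
    using d1[OF that] unfolding y_def by simp
  have "y u > 0"
  proof -
    obtain w where "w \<in> V" "x w \<noteq> 0"
      using x0 by blast
    then have "y w > 0"
      using d1[OF \<open>w \<in> V\<close>] unfolding y_def by simp
    then show ?thesis
      using umax[OF \<open>w \<in> V\<close>] by linarith
  qed
  have "mu * d u * y u = mu * \<bar>x u\<bar>"
    by (simp add: xy[OF u] mult.assoc)
  also have "\<dots> \<le> \<bar>mu * x u\<bar>"
    unfolding abs_mult by (intro mult_right_mono) auto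
  also have "\<dots> \<le> \<bar>d u * x u\<bar> + \<bar>\<Sum>v\<in>?N u. x v\<bar>"
    unfolding x[OF u, symmetric] by (rule abs_triangle_ineq)
  also have "\<dots> \<le> d u * \<bar>x u\<bar> + (\<Sum>v\<in>?N u. \<bar>x v\<bar>)"
    using d1[OF u] by (intro add_mono sum_abs) (simp add: abs_mult)
  also have "\<dots> \<le> d u * (d u * y u) + (\<Sum>v\<in>?N u. d v * y u)"
  proof -
    have bound: "\<bar>x v\<bar> \<le> d v * y u" if "v \<in> ?N u" for v
    proof -
      from that have "v \<in> V" by simp
      have "\<bar>x v\<bar> = d v * y v"
        using xy[OF \<open>v \<in> V\<close>] .
      also have "\<dots> \<le> d v * y u"
        using umax[OF \<open>v \<in> V\<close>] d1[OF \<open>v \<in> V\<close>] by (simp add: mult_left_mono)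
      finally show ?thesis .
    qed
    then show ?thesis
      by (intro add_mono sum_mono) (simp_all add: xy[OF u])
  qed
  also have "\<dots> = ((d u)\<^sup>2 + (\<Sum>v\<in>?N u. d v)) * y u"
    by (simp add: power2_eq_square distrib_right sum_distrib_right mult.assoc)
  finally have "mu * d u \<le> (d u)\<^sup>2 + (\<Sum>v\<in>?N u. d v)"
    using \<open>y u > 0\<close> by simp
  then show thesis
    using that[OF u] unfolding d_def by simp
qed

lemma add_min_div_le:
  fixes d k c :: real
  assumes "0 < d" and "d \<le> k"
  shows "d + min k (c / d) \<le> k + c / k"
proof (cases "c \<le> d * k")
  case True
  have "(d - k) * (d * k - c) \<le> 0"
    using True assms by (intro mult_nonpos_nonneg) auto
  then have "d + c / d \<le> k + c / k"
    using assms by (simp add: field_simps)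
  then show ?thesis by linarith
next
  case False
  then have "d \<le> c / k"
    using assms by (simp add: le_divide_eq mult.commute)
  then show ?thesis by linarith
qed

lemma signless_eigenvalue_le:
  assumes sg: "simple_graph V E" and "connected_graph V E" and n: "card V \<ge> 2"
    and ev: "signless_laplacian_eigenvalue V E mu"
  shows "mu \<le> 2 * real (num_edges V E) / (real (card V) - 1) + real (card V) - 2"
proof -
  let ?n = "real (card V)" and ?m = "real (num_edges V E)"
  have pos: "\<And>w. w \<in> V \<Longrightarrow> 1 \<le> Defs.degree V E w"
    using one_le_degree[OF sg \<open>connected_graph V E\<close> n] .
  obtain u where u: "u \<in> V" and
    mu: "mu * real (Defs.degree V E u)
           \<le> (real (Defs.degree V E u))\<^sup>2 + (\<Sum>v\<in>{w\<in>V. E u w}. real (Defs.degree V E v))"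
    using signless_eigenvalue_le_at_vertex[OF sg pos ev] .
  define d where "d = real (Defs.degree V E u)"
  define S where "S = (\<Sum>v\<in>{w\<in>V. E u w}. real (Defs.degree V E v))"
  have degree_le: "real (Defs.degree V E v) \<le> ?n - 1" if "v \<in> V" for v
  proof -
    have "Defs.degree V E v + 1 \<le> card V"
      using degree_less_card[OF sg that] by simp
    then have "real (Defs.degree V E v + 1) \<le> ?n"
      by (simp only: of_nat_le_iff)
    then show ?thesis by simp
  qed
  have d: "1 \<le> d" "d \<le> ?n - 1"
    using pos[OF u] degree_le[OF u] unfolding d_def by simp_all
  have "S \<le> d * (?n - 1)"
  proof -
    have "S \<le> (\<Sum>v\<in>{w\<in>V. E u w}. ?n - 1)"
      unfolding S_def by (intro sum_mono) (auto intro: degree_le)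
    then show ?thesis
      unfolding d_def Defs.degree_def by simp
  qed
  then have S_le_n: "S / d \<le> ?n - 1"
    using d(1) by (simp add: pos_divide_le_eq mult.commute)
  have "S \<le> 2 * ?m - ?n + 1"
  proof -
    have "real ((\<Sum>v\<in>{w\<in>V. E u w}. Defs.degree V E v) + card V) \<le> real (2 * num_edges V E + 1)"
      using sum_neighbour_degrees_le[OF sg pos u] by (simp only: of_nat_le_iff)
    then show ?thesis
      unfolding S_def by simp
  qed
  then have S_le_m: "S / d \<le> (2 * ?m - ?n + 1) / d"
    using d(1) by (simp add: divide_right_mono)
  have "mu \<le> d + S / d"
    using mu d(1) unfolding d_def[symmetric] S_def[symmetric]
    by (simp add: field_simps power2_eq_square)
  also have "\<dots> \<le> d + min (?n - 1) ((2 * ?m - ?n + 1) / d)"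
    using S_le_n S_le_m by simp
  also have "\<dots> \<le> (?n - 1) + (2 * ?m - ?n + 1) / (?n - 1)"
    using d by (intro add_min_div_le) auto
  also have "\<dots> = 2 * ?m / (?n - 1) + ?n - 2"
    using n by (simp add: field_simps)
  finally show ?thesis .
qed

definition kernel_eigenvalue :: "'a set \<Rightarrow> ('a \<Rightarrow> 'a \<Rightarrow> 'b::comm_ring_1) \<Rightarrow> 'b \<Rightarrow> bool" where
  "kernel_eigenvalue V K z \<longleftrightarrow>
     (\<exists>Y. (\<exists>u\<in>V. Y u \<noteq> 0) \<and> (\<forall>u\<in>V. (\<Sum>w\<in>V. K u w * Y w) = z * Y u))"

lemma kernel_eigenvalue_iff_eigenvalue:
  assumes f: "bij_betw f {0..<n} V"
  shows "kernel_eigenvalue V K z \<longleftrightarrow> eigenvalue (mat n n (\<lambda>(i, j). K (f i) (f j))) z"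
proof -
  define A where "A = mat n n (\<lambda>(i, j). K (f i) (f j))"
  define g where "g = inv_into {0..<n} f"
  have fV: "\<And>i. i < n \<Longrightarrow> f i \<in> V" and gV: "\<And>w. w \<in> V \<Longrightarrow> g w < n"
    and gf: "\<And>i. i < n \<Longrightarrow> g (f i) = i" and fg: "\<And>w. w \<in> V \<Longrightarrow> f (g w) = w"
    using f unfolding g_def
    by (auto simp: bij_betw_def bij_betw_inv_into_left bij_betw_inv_into_right inv_into_into)
  have A: "A \<in> carrier_mat n n" unfolding A_def by simp
  have row: "(A *\<^sub>v v) $ i = (\<Sum>w\<in>V. K (f i) w * v $ g w)"
    if "v \<in> carrier_vec n" "i < n" for v i
  proof -
    have "(A *\<^sub>v v) $ i = (\<Sum>j\<in>{0..<n}. K (f i) (f j) * v $ j)"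
      using that unfolding A_def by (simp add: scalar_prod_def)
    also have "\<dots> = (\<Sum>j\<in>{0..<n}. K (f i) (f j) * v $ g (f j))"
      using gf by simp
    also have "\<dots> = (\<Sum>w\<in>V. K (f i) w * v $ g w)"
      by (rule sum.reindex_bij_betw[OF f])
    finally show ?thesis .
  qed
  show ?thesis
    unfolding A_def[symmetric]
  proof
    assume "kernel_eigenvalue V K z"
    then obtain Y where Y0: "\<exists>u\<in>V. Y u \<noteq> 0" and Y: "\<forall>u\<in>V. (\<Sum>w\<in>V. K u w * Y w) = z * Y u"
      unfolding kernel_eigenvalue_def by blast
    define v where "v = vec n (\<lambda>i. Y (f i))"
    have vg: "v $ g w = Y w" if "w \<in> V" for w
      using that gV fg unfolding v_def by simp
    have "v \<in> carrier_vec n"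
      unfolding v_def by simp
    moreover have "v \<noteq> 0\<^sub>v n"
      using Y0 vg gV by (metis index_zero_vec(1))
    moreover have "A *\<^sub>v v = z \<cdot>\<^sub>v v"
      by (rule eq_vecI) (use A row[of v] vg Y fV in \<open>auto simp: v_def\<close>)
    ultimately show "eigenvalue A z"
      unfolding eigenvalue_def eigenvector_def using A by auto
  next
    assume "eigenvalue A z"
    then obtain v where v: "v \<in> carrier_vec n" "v \<noteq> 0\<^sub>v n" "A *\<^sub>v v = z \<cdot>\<^sub>v v"
      unfolding eigenvalue_def eigenvector_def using A by auto
    have "\<exists>u\<in>V. v $ g u \<noteq> 0"
      using v(1,2) gf fV by (metis carrier_vecD eq_vecI index_zero_vec)
    moreover have "(\<Sum>w\<in>V. K u w * v $ g w) = z * v $ g u" if "u \<in> V" for u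
      using row[OF v(1) gV[OF that]] v(1,3) gV[OF that] fg[OF that] by simp
    ultimately show "kernel_eigenvalue V K z"
      unfolding kernel_eigenvalue_def by (intro exI[of _ "\<lambda>w. v $ g w"]) blast
  qed
qed

lemma finite_kernel_eigenvalues:
  fixes K :: "'a \<Rightarrow> 'a \<Rightarrow> 'b::field"
  assumes "finite V"
  shows "finite (Collect (kernel_eigenvalue V K))"
proof -
  obtain f where f: "bij_betw f {0..<card V} V"
    using ex_bij_betw_nat_finite[OF assms] by blast
  define A where "A = mat (card V) (card V) (\<lambda>(i, j). K (f i) (f j))"
  have "Collect (kernel_eigenvalue V K) = spectrum A"
    unfolding spectrum_def A_def kernel_eigenvalue_iff_eigenvalue[OF f] ..
  then show ?thesis
    using card_finite_spectrum(1)[of A "card V"] unfolding A_def by simp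
qed

lemma ex_kernel_eigenvalue:
  fixes K :: "'a \<Rightarrow> 'a \<Rightarrow> complex"
  assumes "finite V" and "V \<noteq> {}"
  shows "\<exists>z. kernel_eigenvalue V K z"
proof -
  obtain f where f: "bij_betw f {0..<card V} V"
    using ex_bij_betw_nat_finite[OF assms(1)] by blast
  define A where "A = mat (card V) (card V) (\<lambda>(i, j). K (f i) (f j))"
  have "spectrum A \<noteq> {}"
    using spectrum_non_empty[of A "card V"] assms unfolding A_def by (simp add: card_gt_0_iff)
  then show ?thesis
    unfolding spectrum_def A_def kernel_eigenvalue_iff_eigenvalue[OF f, symmetric] by blast
qed

lemma sum_mult_kernel_swap:
  fixes K :: "'a \<Rightarrow> 'a \<Rightarrow> 'b::comm_semiring_0"
  assumes sym: "\<And>u w. u \<in> V \<Longrightarrow> w \<in> V \<Longrightarrow> K u w = K w u"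
  shows "(\<Sum>u\<in>V. b u * (\<Sum>w\<in>V. K u w * a w)) = (\<Sum>u\<in>V. a u * (\<Sum>w\<in>V. K u w * b w))"
proof -
  have "(\<Sum>u\<in>V. b u * (\<Sum>w\<in>V. K u w * a w)) = (\<Sum>u\<in>V. \<Sum>w\<in>V. b u * K u w * a w)"
    by (simp add: sum_distrib_left mult.assoc)
  also have "\<dots> = (\<Sum>w\<in>V. \<Sum>u\<in>V. b u * K u w * a w)"
    by (rule sum.swap)
  also have "\<dots> = (\<Sum>w\<in>V. a w * (\<Sum>u\<in>V. K w u * b u))"
    using sym by (simp add: sum_distrib_left mult_ac)
  finally show ?thesis .
qed

text \<open>A real symmetric kernel has only real eigenvalues: with Y = a + i b, symmetry makes
  b \<bullet> K a = a \<bullet> K b, which forces Im z (|a|^2 + |b|^2) = 0; the nonzero one of a, b is then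
  a real eigenvector.\<close>
lemma kernel_eigenvalue_Re:
  fixes K :: "'a \<Rightarrow> 'a \<Rightarrow> real"
  assumes "finite V"
    and sym: "\<And>u w. u \<in> V \<Longrightarrow> w \<in> V \<Longrightarrow> K u w = K w u"
    and "kernel_eigenvalue V (\<lambda>u w. complex_of_real (K u w)) z"
  shows "kernel_eigenvalue V K (Re z)"
proof -
  obtain Y where Y0: "\<exists>u\<in>V. Y u \<noteq> 0"
    and Y: "\<And>u. u \<in> V \<Longrightarrow> (\<Sum>w\<in>V. complex_of_real (K u w) * Y w) = z * Y u"
    using assms(3) unfolding kernel_eigenvalue_def by blast
  define a where "a w = Re (Y w)" for w
  define b where "b w = Im (Y w)" for w
  have Ka: "(\<Sum>w\<in>V. K u w * a w) = Re z * a u - Im z * b u" if "u \<in> V" for u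
    using arg_cong[OF Y[OF that], of Re] by (simp add: Re_sum a_def b_def)
  have Kb: "(\<Sum>w\<in>V. K u w * b w) = Im z * a u + Re z * b u" if "u \<in> V" for u
    using arg_cong[OF Y[OF that], of Im] by (simp add: Im_sum a_def b_def)
  have "(\<Sum>u\<in>V. b u * (Re z * a u - Im z * b u)) = (\<Sum>u\<in>V. a u * (Im z * a u + Re z * b u))"
    using sum_mult_kernel_swap[where V = V and K = K and a = a and b = b] sym Ka Kb by simp
  then have "Im z * (\<Sum>u\<in>V. (a u)\<^sup>2 + (b u)\<^sup>2) = 0"
    by (simp add: algebra_simps sum.distrib sum_subtractf sum_distrib_left power2_eq_square)
  moreover have "(\<Sum>u\<in>V. (a u)\<^sup>2 + (b u)\<^sup>2) > 0"
  proof -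
    obtain u where "u \<in> V" "Y u \<noteq> 0" using Y0 by blast
    moreover from \<open>Y u \<noteq> 0\<close> have "(a u)\<^sup>2 + (b u)\<^sup>2 > 0"
      by (simp add: a_def b_def complex_eq_iff sum_power2_gt_zero_iff)
    ultimately show ?thesis
      using assms(1) by (intro sum_pos2) auto
  qed
  ultimately have "Im z = 0" by simp
  consider "\<exists>u\<in>V. a u \<noteq> 0" | "\<exists>u\<in>V. b u \<noteq> 0"
    using Y0 by (auto simp: a_def b_def complex_eq_iff)
  then show ?thesis
  proof cases
    case 1
    then show ?thesis
      using Ka \<open>Im z = 0\<close> unfolding kernel_eigenvalue_def by (intro exI[of _ a]) simp
  next
    case 2
    then show ?thesis
      using Kb \<open>Im z = 0\<close> unfolding kernel_eigenvalue_def by (intro exI[of _ b]) simp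
  qed
qed

definition signless_laplacian :: "'a set \<Rightarrow> ('a \<Rightarrow> 'a \<Rightarrow> bool) \<Rightarrow> 'a \<Rightarrow> 'a \<Rightarrow> real" where
  "signless_laplacian V E u w =
     (if u = w then real (Defs.degree V E u) else 0) + (if E u w then 1 else 0)"

lemma signless_laplacian_sym:
  "simple_graph V E \<Longrightarrow> signless_laplacian V E u w = signless_laplacian V E w u"
  unfolding simple_graph_def signless_laplacian_def by auto

lemma sum_signless_laplacian_row:
  assumes "finite V" and "u \<in> V"
  shows "(\<Sum>w\<in>V. signless_laplacian V E u w * x w)
           = real (Defs.degree V E u) * x u + (\<Sum>v\<in>{w\<in>V. E u w}. x v)"
  using assms by (simp add: signless_laplacian_def distrib_right sum.distrib sum.inter_filter
                            if_distrib[of "\<lambda>c. c * _"] cong: if_cong)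

lemma signless_laplacian_eigenvalue_iff_kernel:
  "simple_graph V E \<Longrightarrow>
     signless_laplacian_eigenvalue V E mu \<longleftrightarrow> kernel_eigenvalue V (signless_laplacian V E) mu"
  unfolding signless_laplacian_eigenvalue_def kernel_eigenvalue_def
  by (simp add: sum_signless_laplacian_row simple_graph_finite)

lemma signless_spectral_radius_eigenvalue:
  assumes sg: "simple_graph V E" and "V \<noteq> {}"
  shows "signless_laplacian_eigenvalue V E (signless_spectral_radius V E)"
proof -
  let ?S = "Collect (signless_laplacian_eigenvalue V E)"
  have fin: "finite V"
    using sg by (rule simple_graph_finite)
  have "?S = Collect (kernel_eigenvalue V (signless_laplacian V E))"
    using signless_laplacian_eigenvalue_iff_kernel[OF sg] by blast
  then have "finite ?S"
    using finite_kernel_eigenvalues[OF fin] by simp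
  moreover obtain z where "kernel_eigenvalue V (\<lambda>u w. complex_of_real (signless_laplacian V E u w)) z"
    using ex_kernel_eigenvalue[OF fin \<open>V \<noteq> {}\<close>] by blast
  then have "Re z \<in> ?S"
    using kernel_eigenvalue_Re[OF fin] signless_laplacian_sym[OF sg]
      signless_laplacian_eigenvalue_iff_kernel[OF sg] by blast
  ultimately have "Max ?S \<in> ?S"
    by (intro Max_in) auto
  then show ?thesis
    unfolding signless_spectral_radius_def by simp
qed

theorem lemma2p4:
  fixes V :: "'a set" and E :: "'a \<Rightarrow> 'a \<Rightarrow> bool"
  assumes "simple_graph V E"
    and "connected_graph V E"
    and "card V \<ge> 4"
    and "num_edges V E \<ge> card V"
    and "randic V E > sqrt (real (card V) - 1)
           + (2 * real (num_edges V E) - 2 * real (card V) + 2)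
             / (real (card V) * sqrt (real (card V) - 1))"
  shows "signless_spectral_radius V E / randic V E < real (card V) / sqrt (real (card V) - 1)"
proof -
  define n where "n = real (card V)"
  define m where "m = real (num_edges V E)"
  define s where "s = sqrt (n - 1)"
  define t where "t = s + (2 * m - 2 * n + 2) / (n * s)"
  have n: "n \<ge> 4" "m \<ge> n"
    using assms(3,4) unfolding n_def m_def by simp_all
  have s: "s > 0" "s * s = n - 1"
    using n unfolding s_def by simp_all
  have "t < randic V E"
    using assms(5) unfolding t_def s_def n_def m_def by simp
  have "t > 0"
    unfolding t_def using n s by (intro add_pos_nonneg divide_nonneg_pos) auto
  have "signless_spectral_radius V E \<le> 2 * m / (n - 1) + n - 2"
    using signless_eigenvalue_le[OF assms(1,2)] signless_spectral_radius_eigenvalue[OF assms(1)]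
      assms(3) unfolding n_def m_def by force
  also have "\<dots> = n + (2 * m - 2 * n + 2) / (s * s)"
    unfolding s(2) using n by (simp add: field_simps)
  also have "\<dots> = t * (n / s)"
    unfolding t_def using n s(1) by (simp add: field_simps)
  also have "\<dots> < randic V E * (n / s)"
    using \<open>t < randic V E\<close> n s(1) by (intro mult_strict_right_mono) auto
  finally show ?thesis
    using \<open>t > 0\<close> \<open>t < randic V E\<close> unfolding n_def s_def by (simp add: divide_less_eq mult.commute)
qed

end
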